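(* Let $L$ be a finite set with $|L|=n$. Then: (a) the refinement relation $\preceq$ on $\tilde P_{\mathrm I}$ is a partial order; (b) $\{s(\mathbf A):\mathbf A\in P_{\mathrm{II}}\}$ equals the set $\tilde P_{\mathrm{II}}$ of nonempty down-sets of $(\tilde P_{\mathrm I},\preceq)$, and for all $\tilde{\mathbf A},\tilde{\mathbf B}\in\tilde P_{\mathrm{II}}$: there exist $\mathbf A,\mathbf B\in P_{\mathrm{II}}$ with $s(\mathbf A)=\tilde{\mathbf A}$, $s(\mathbf B)=\tilde{\mathbf B}$ and $\mathbf B\subseteq\mathbf A$ if and only if $\tilde{\mathbf B}\subseteq\tilde{\mathbf A}$; (c) $\{s(\mathfrak A):\mathfrak A\in P_{\mathrm{III}}\}$ equals the set of nonempty up-sets of $(\tilde P_{\mathrm{II}},\subseteq)$, and for all nonempty up-sets $\tilde{\mathfrak A},\tilde{\mathfrak B}$ of $(\tilde P_{\mathrm{II}},\subseteq)$: there exist $\mathfrak A,\mathfrak B\in P_{\mathrm{III}}$ with $s(\mathfrak A)=\tilde{\mathfrak A}$, $s(\mathfrak B)=\tilde{\mathfrak B}$ and $\mathfrak B\subseteq\mathfrak A$ if and only if $\tilde{\mathfrak B}\subseteq\tilde{\mathfrak A}$.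
   Context: A set partition of $L$ is a set $\xi$ of nonempty, pairwise disjoint subsets of $L$ whose union is $L$; $P_{\mathrm I}$ is the set of set partitions of $L$, with refinement $\upsilon\preceq\xi$ iff every $Y\in\upsilon$ is contained in some $X\in\xi$. An integer partition of $n$ is a finite multiset of positive integers summing to $n$; $\tilde P_{\mathrm I}$ is the set of integer partitions of $n$. The type map is $s(\xi)=$ the multiset $\{|X|:X\in\xi\}$. Refinement on $\tilde P_{\mathrm I}$: $\tilde\upsilon\preceq\tilde\xi$ iff there exist $\upsilon,\xi\in P_{\mathrm I}$ with $s(\upsilon)=\tilde\upsilon$, $s(\xi)=\tilde\xi$, $\upsilon\preceq\xi$. A down-set (resp. up-set) of a poset is a subset closed downward (resp. upward). $P_{\mathrm{II}}$ is the set of nonempty down-sets of $(P_{\mathrm I},\preceq)$, ordered by inclusion; $P_{\mathrm{III}}$ is the set of nonempty up-sets of $(P_{\mathrm{II}},\subseteq)$, ordered by inclusion. $s$ acts elementwise on these: for $\mathbf A\in P_{\mathrm{II}}$, $s(\mathbf A)=\{s(\xi):\xi\in\mathbf A\}$ (a set), and for $\mathfrak A\in P_{\mathrm{III}}$, $s(\mathfrak A)=\{s(\mathbf A):\mathbf A\in\mathfrak A\}$. *)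

theory Defs
  imports Main "HOL-Library.Multiset" "HOL-Library.Disjoint_Sets"
begin

definition set_partitions :: "'a set \<Rightarrow> 'a set set set" where
  "set_partitions L = {\<xi>. partition_on L \<xi>}"

definition refines :: "'a set set \<Rightarrow> 'a set set \<Rightarrow> bool" where
  "refines \<upsilon> \<xi> \<longleftrightarrow> (\<forall>Y\<in>\<upsilon>. \<exists>X\<in>\<xi>. Y \<subseteq> X)"

definition int_partitions :: "nat \<Rightarrow> nat multiset set" where
  "int_partitions n = {m. (\<forall>x\<in>#m. 0 < x) \<and> sum_mset m = n}"

definition ptype :: "'a set set \<Rightarrow> nat multiset" where
  "ptype \<xi> = image_mset card (mset_set \<xi>)"

definition int_refines :: "'a set \<Rightarrow> nat multiset \<Rightarrow> nat multiset \<Rightarrow> bool" where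
  "int_refines L u x \<longleftrightarrow> (\<exists>\<upsilon> \<xi>. \<upsilon> \<in> set_partitions L \<and> \<xi> \<in> set_partitions L
      \<and> ptype \<upsilon> = u \<and> ptype \<xi> = x \<and> refines \<upsilon> \<xi>)"

definition down_sets :: "'b set \<Rightarrow> ('b \<Rightarrow> 'b \<Rightarrow> bool) \<Rightarrow> 'b set set" where
  "down_sets A le = {D. D \<subseteq> A \<and> D \<noteq> {} \<and> (\<forall>x\<in>D. \<forall>y\<in>A. le y x \<longrightarrow> y \<in> D)}"

definition up_sets :: "'b set \<Rightarrow> ('b \<Rightarrow> 'b \<Rightarrow> bool) \<Rightarrow> 'b set set" where
  "up_sets A le = {U. U \<subseteq> A \<and> U \<noteq> {} \<and> (\<forall>x\<in>U. \<forall>y\<in>A. le x y \<longrightarrow> y \<in> U)}"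

definition P_II :: "'a set \<Rightarrow> 'a set set set set" where
  "P_II L = down_sets (set_partitions L) refines"

definition P_III :: "'a set \<Rightarrow> 'a set set set set set" where
  "P_III L = up_sets (P_II L) (\<subseteq>)"

definition tP_II :: "'a set \<Rightarrow> nat \<Rightarrow> nat multiset set set" where
  "tP_II L n = down_sets (int_partitions n) (int_refines L)"

definition tP_III :: "'a set \<Rightarrow> nat \<Rightarrow> nat multiset set set set" where
  "tP_III L n = up_sets (tP_II L n) (\<subseteq>)"

end

theory Submission
  imports Defs
begin

text \<open>Two set partitions of the same type are carried onto each other by a bijection of the
  ground set, and refinement is transported along such bijections. Hence the type map is a
  monotone surjection with a lifting property: whenever an integer partition refines the type of
  \<open>\<xi>\<close>, it is the type of a refinement of \<open>\<xi>\<close> itself. For any such map, taking images and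
  preimages gives a correspondence of nonempty down-sets that preserves inclusion, which is (b).
  The image map on down-sets has the dual lifting property (enlarge a down-set by the preimage of
  a larger one), so the same argument for up-sets gives (c). Antisymmetry in (a) holds because a
  proper refinement has strictly more blocks.\<close>

lemma ptype_image:
  assumes "inj_on h (\<Union>P)"
  shows "ptype ((`) h ` P) = ptype P"
proof -
  have "ptype ((`) h ` P) = image_mset card (image_mset ((`) h) (mset_set P))"
    by (simp add: ptype_def image_mset_mset_set[OF inj_on_image[OF assms]])
  also have "\<dots> = image_mset card (mset_set P)"
    unfolding multiset.map_comp
  proof (intro image_mset_cong)
    fix X assume "X \<in># mset_set P"
    then have "X \<in> P" by (cases "finite P") auto
    then show "(card \<circ> (`) h) X = card X"
      using inj_on_subset[OF assms Union_upper] by (simp add: card_image)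
  qed
  finally show ?thesis by (simp add: ptype_def)
qed

lemma partition_on_finite_block:
  "finite A \<Longrightarrow> partition_on A P \<Longrightarrow> X \<in> P \<Longrightarrow> finite X"
  by (metis Union_upper finite_subset partition_onD1)

lemma sum_ptype:
  assumes "finite A" "partition_on A P"
  shows "sum_mset (ptype P) = card A"
  using product_partition[OF assms(2)] partition_on_finite_block[OF assms]
  by (simp add: ptype_def sum_unfold_sum_mset)

lemma ptype_in_int_partitions:
  assumes "finite A" "partition_on A P"
  shows "ptype P \<in> int_partitions (card A)"
proof -
  have "0 < card X" if "X \<in> P" for X
    using that partition_on_finite_block[OF assms] partition_onD3[OF assms(2)]
    by (auto simp: card_gt_0_iff)
  then show ?thesis
    using sum_ptype[OF assms] finite_elements[OF assms]
    by (auto simp: int_partitions_def ptype_def)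
qed

lemma ex_partition_on_with_ptype:
  assumes "finite A" "\<forall>k\<in>#m. 0 < k" "sum_mset m = card A"
  shows "\<exists>P. partition_on A P \<and> ptype P = m"
  using assms
proof (induction m arbitrary: A)
  case empty
  then show ?case by (auto simp: partition_on_empty ptype_def)
next
  case (add k m)
  then have "k \<le> card A" by simp
  then obtain X where X: "X \<subseteq> A" "card X = k" "finite X"
    by (rule obtain_subset_with_card_n)
  have "X \<noteq> {}"
    using add.prems(2) X(2) by auto
  have "finite (A - X)" "\<forall>k\<in>#m. 0 < k" "sum_mset m = card (A - X)"
    using add.prems X by (simp_all add: card_Diff_subset)
  then obtain P where P: "partition_on (A - X) P" "ptype P = m"
    using add.IH by blast
  have "X \<notin> P" "disjnt X (\<Union>P)"
    using partition_onD1[OF P(1)] \<open>X \<noteq> {}\<close> by (blast, auto simp: disjnt_def)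
  have "partition_on A (insert X P)" "ptype (insert X P) = add_mset k m"
  proof -
    show "partition_on A (insert X P)"
      using partition_on_insert[OF \<open>disjnt X (\<Union>P)\<close>] P(1) X(1) \<open>X \<noteq> {}\<close> by blast
    have "finite P"
      using finite_elements[OF \<open>finite (A - X)\<close> P(1)] .
    then show "ptype (insert X P) = add_mset k m"
      using \<open>X \<notin> P\<close> P(2) X(2) by (simp add: ptype_def)
  qed
  then show ?case by blast
qed

lemma partition_on_Diff_block:
  assumes "partition_on A P" "X \<in> P"
  shows "partition_on (A - X) (P - {X})"
proof -
  have "disjnt X (\<Union>(P - {X}))"
    using partition_onD2[OF assms(1)] assms(2) by (auto simp: disjnt_def pairwise_def)
  then show ?thesis
    using partition_on_insert[of X "P - {X}" A] assms by (simp add: insert_absorb)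
qed

lemma same_ptype_ex_bij_betw:
  assumes "finite A" "finite A'" "partition_on A P" "partition_on A' P'" "ptype P' = ptype P"
  shows "\<exists>h. bij_betw h A' A \<and> (`) h ` P' = P"
proof -
  have "finite P" using finite_elements[OF assms(1,3)] .
  then show ?thesis
    using assms
  proof (induction P arbitrary: A A' P' rule: finite_induct)
    case empty
    then have "P' = {}"
      using finite_elements[OF empty.prems(2,4)] by (simp add: ptype_def mset_set_empty_iff)
    then have "A = {}" "A' = {}"
      using partition_onD1[OF empty.prems(3)] partition_onD1[OF empty.prems(4)] by simp_all
    then show ?case
      using \<open>P' = {}\<close> by (simp add: bij_betw_def)
  next
    case (insert X P0)
    have "finite P'" using finite_elements[OF insert.prems(2,4)] .
    have "card X \<in># ptype P'"
      using insert.prems(5) insert.hyps by (simp add: ptype_def)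
    then obtain X' where X': "X' \<in> P'" "card X' = card X"
      using \<open>finite P'\<close> by (auto simp: ptype_def)
    have "ptype (P' - {X'}) = ptype P0"
      using insert.prems(5) insert.hyps \<open>finite P'\<close> X'
      by (simp add: ptype_def mset_set.remove[OF \<open>finite P'\<close> X'(1)])
    moreover have "partition_on (A - X) P0" "partition_on (A' - X') (P' - {X'})"
      using partition_on_Diff_block[OF insert.prems(3), of X] insert.hyps(2)
        partition_on_Diff_block[OF insert.prems(4) X'(1)] by simp_all
    ultimately obtain h0 where h0: "bij_betw h0 (A' - X') (A - X)" "(`) h0 ` (P' - {X'}) = P0"
      using insert.IH[of "A - X" "A' - X'" "P' - {X'}"] insert.prems(1,2) by blast
    have "X \<subseteq> A" "X' \<subseteq> A'"
      using insert.prems(3,4) X'(1) partition_onD1 by blast+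
    then obtain g where g: "bij_betw g X' X"
      using finite_same_card_bij X'(2) insert.prems(1,2) finite_subset by metis
    define h where "h z = (if z \<in> X' then g z else h0 z)" for z
    have "bij_betw h X' X" "bij_betw h (A' - X') (A - X)"
      using g h0(1) by (auto simp: h_def intro: bij_betw_cong[THEN iffD1])
    then have "bij_betw h (X' \<union> (A' - X')) (X \<union> (A - X))"
      by (rule bij_betw_combine) blast
    then have "bij_betw h A' A"
      using \<open>X \<subseteq> A\<close> \<open>X' \<subseteq> A'\<close> by (simp add: Un_absorb1)
    moreover have "(`) h ` P' = insert X P0"
    proof -
      have "h ` X' = X"
        using g by (simp add: h_def bij_betw_def)
      moreover have "h ` Z = h0 ` Z" if "Z \<in> P' - {X'}" for Z
        using partition_onD2[OF insert.prems(4)] X'(1) that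
        by (auto simp: h_def pairwise_def disjnt_def)
      then have "(`) h ` (P' - {X'}) = P0"
        using h0(2) image_cong[of "P' - {X'}" _ "(`) h" "(`) h0"] by blast
      moreover have "P' = insert X' (P' - {X'})"
        using X'(1) by blast
      ultimately show ?thesis
        using \<open>h ` X' = X\<close> by (metis image_insert)
    qed
    ultimately show ?case by blast
  qed
qed

lemma ex_refinement_with_ptype:
  assumes "finite A" "finite A'" "partition_on A \<xi>" "partition_on A' \<xi>'" "ptype \<xi>' = ptype \<xi>"
    and "partition_on A' \<upsilon>'" "refines \<upsilon>' \<xi>'"
  shows "\<exists>\<upsilon>. partition_on A \<upsilon> \<and> refines \<upsilon> \<xi> \<and> ptype \<upsilon> = ptype \<upsilon>'"
proof -
  obtain h where h: "bij_betw h A' A" "(`) h ` \<xi>' = \<xi>"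
    using same_ptype_ex_bij_betw[OF assms(1-5)] by blast
  have inj: "inj_on h (\<Union>\<upsilon>')"
    using h(1) partition_onD1[OF assms(6)] by (simp add: bij_betw_def)
  have "{} \<notin> (`) h ` \<upsilon>'"
    using partition_onD3[OF assms(6)] by auto
  then have "partition_on A ((`) h ` \<upsilon>')"
    using partition_on_inj_image[OF assms(6), of h] h(1) by (simp add: bij_betw_def)
  moreover have "refines ((`) h ` \<upsilon>') \<xi>"
    unfolding refines_def
  proof
    fix Y assume "Y \<in> (`) h ` \<upsilon>'"
    then obtain Y' X' where "Y = h ` Y'" "X' \<in> \<xi>'" "Y' \<subseteq> X'"
      using assms(7) by (auto simp: refines_def)
    then show "\<exists>X\<in>\<xi>. Y \<subseteq> X"
      using h(2) by blast
  qed
  ultimately show ?thesis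
    using ptype_image[OF inj] by blast
qed

lemma refines_card_less:
  assumes "finite A" "partition_on A \<upsilon>" "partition_on A \<xi>" "refines \<upsilon> \<xi>" "\<upsilon> \<noteq> \<xi>"
  shows "card \<xi> < card \<upsilon>"
proof -
  define F where "F X = {Y \<in> \<upsilon>. Y \<subseteq> X}" for X
  have F_partition: "partition_on X (F X)" if "X \<in> \<xi>" for X
    unfolding F_def using that assms(2-4)
    by (intro refines_obtains_subset) (simp_all add: Disjoint_Sets.refines_def refines_def)
  have F_finite: "finite (F X)" for X
    using finite_elements[OF assms(1,2)] by (simp add: F_def)
  have "\<upsilon> = (\<Union>X\<in>\<xi>. F X)"
    using assms(4) by (auto simp: F_def refines_def)
  moreover have "F X \<inter> F X' = {}" if "X \<in> \<xi>" "X' \<in> \<xi>" "X \<noteq> X'" for X X'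
  proof -
    have "X \<inter> X' = {}"
      using partition_onD2[OF assms(3)] that by (simp add: pairwise_def disjnt_def)
    then show ?thesis
      using partition_onD3[OF assms(2)] by (auto simp: F_def) (metis Int_greatest subset_empty)
  qed
  ultimately have card_\<upsilon>: "card \<upsilon> = (\<Sum>X\<in>\<xi>. card (F X))"
    using finite_elements[OF assms(1,3)] F_finite by (simp add: card_UN_disjoint)
  have F_ne: "F X \<noteq> {}" if "X \<in> \<xi>" for X
    using partition_onD1[OF F_partition[OF that]] partition_onD3[OF assms(3)] that by auto
  have "\<exists>X\<in>\<xi>. F X \<noteq> {X}"
  proof (rule ccontr)
    assume "\<not> ?thesis"
    then have "\<upsilon> = \<xi>"
      using \<open>\<upsilon> = (\<Union>X\<in>\<xi>. F X)\<close> by simp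
    with assms(5) show False ..
  qed
  then obtain X where "X \<in> \<xi>" "F X \<noteq> {X}" ..
  have "1 < card (F X)"
  proof (rule ccontr)
    assume "\<not> 1 < card (F X)"
    then obtain Z where "F X = {Z}"
      using F_ne[OF \<open>X \<in> \<xi>\<close>] F_finite by (metis card_0_eq card_1_singletonE less_one linorder_neqE_nat)
    then show False
      using partition_onD1[OF F_partition[OF \<open>X \<in> \<xi>\<close>]] \<open>F X \<noteq> {X}\<close> by simp
  qed
  then have "(\<Sum>X\<in>\<xi>. 1) < (\<Sum>X\<in>\<xi>. card (F X))"
    using finite_elements[OF assms(1,3)] F_ne F_finite \<open>X \<in> \<xi>\<close>
    by (intro sum_strict_mono_ex1) (auto simp: Suc_le_eq card_gt_0_iff)
  then show ?thesis
    using card_\<upsilon> by simp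
qed

locale monotone_surjection =
  fixes f :: "'a \<Rightarrow> 'b" and A :: "'a set" and le :: "'a \<Rightarrow> 'a \<Rightarrow> bool"
    and B :: "'b set" and le' :: "'b \<Rightarrow> 'b \<Rightarrow> bool"
  assumes image_eq: "f ` A = B"
    and mono: "\<And>a a'. a \<in> A \<Longrightarrow> a' \<in> A \<Longrightarrow> le a' a \<Longrightarrow> le' (f a') (f a)"
begin

lemma vimage_in_down_sets:
  assumes "E \<in> down_sets B le'"
  shows "{a \<in> A. f a \<in> E} \<in> down_sets A le" "f ` {a \<in> A. f a \<in> E} = E"
proof -
  show "f ` {a \<in> A. f a \<in> E} = E"
    using image_eq assms by (auto simp: down_sets_def)
  then show "{a \<in> A. f a \<in> E} \<in> down_sets A le"
    using image_eq assms mono by (auto simp: down_sets_def)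
qed

lemma exists_down_sets_image_subset_iff:
  assumes "E \<in> down_sets B le'" "E' \<in> down_sets B le'"
  shows "(\<exists>D\<in>down_sets A le. \<exists>D'\<in>down_sets A le. f ` D = E \<and> f ` D' = E' \<and> D' \<subseteq> D)
    \<longleftrightarrow> E' \<subseteq> E"
proof
  assume "E' \<subseteq> E"
  then have "{a \<in> A. f a \<in> E'} \<subseteq> {a \<in> A. f a \<in> E}"
    by blast
  with vimage_in_down_sets[OF assms(1)] vimage_in_down_sets[OF assms(2)]
  show "\<exists>D\<in>down_sets A le. \<exists>D'\<in>down_sets A le. f ` D = E \<and> f ` D' = E' \<and> D' \<subseteq> D"
    by blast
next
  assume "\<exists>D\<in>down_sets A le. \<exists>D'\<in>down_sets A le. f ` D = E \<and> f ` D' = E' \<and> D' \<subseteq> D"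
  then show "E' \<subseteq> E"
    by blast
qed

end

locale lifting_surjection = monotone_surjection +
  assumes lift: "\<And>a b. a \<in> A \<Longrightarrow> b \<in> B \<Longrightarrow> le' b (f a) \<Longrightarrow> \<exists>a'\<in>A. le a' a \<and> f a' = b"
begin

lemma image_in_down_sets:
  assumes "D \<in> down_sets A le"
  shows "f ` D \<in> down_sets B le'"
proof -
  have "b \<in> f ` D" if ab: "a \<in> D" "b \<in> B" "le' b (f a)" for a b
  proof -
    have "a \<in> A"
      using ab(1) assms by (auto simp: down_sets_def)
    then obtain a' where "a' \<in> A" "le a' a" "f a' = b"
      using lift ab(2,3) by blast
    then show ?thesis
      using ab(1) assms by (auto simp: down_sets_def)
  qed
  then show ?thesis
    using image_eq assms by (auto simp: down_sets_def)
qed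

lemma image_down_sets: "(`) f ` down_sets A le = down_sets B le'"
proof
  show "(`) f ` down_sets A le \<subseteq> down_sets B le'"
    using image_in_down_sets by blast
  show "down_sets B le' \<subseteq> (`) f ` down_sets A le"
  proof
    fix E assume "E \<in> down_sets B le'"
    note vimage = vimage_in_down_sets[OF this]
    show "E \<in> (`) f ` down_sets A le"
      by (rule image_eqI[of E "(`) f", OF vimage(2)[symmetric] vimage(1)])
  qed
qed

end

lemma up_sets_eq_down_sets_converse: "up_sets A le = down_sets A (\<lambda>x y. le y x)"
  by (simp add: up_sets_def down_sets_def)

lemma Un_in_down_sets:
  "D \<in> down_sets A le \<Longrightarrow> D' \<in> down_sets A le \<Longrightarrow> D \<union> D' \<in> down_sets A le"
  by (auto simp: down_sets_def)

lemma ptype_set_partitions: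
  assumes "finite L"
  shows "ptype ` set_partitions L = int_partitions (card L)"
proof
  show "ptype ` set_partitions L \<subseteq> int_partitions (card L)"
    using ptype_in_int_partitions[OF assms] by (auto simp: set_partitions_def)
  show "int_partitions (card L) \<subseteq> ptype ` set_partitions L"
  proof
    fix m assume "m \<in> int_partitions (card L)"
    then obtain \<xi> where "partition_on L \<xi>" "ptype \<xi> = m"
      using ex_partition_on_with_ptype[OF assms] by (auto simp: int_partitions_def)
    then show "m \<in> ptype ` set_partitions L"
      by (auto simp: set_partitions_def)
  qed
qed

lemma int_refines_lift:
  assumes "finite L" "\<xi> \<in> set_partitions L" "int_refines L u (ptype \<xi>)"
  shows "\<exists>\<upsilon>\<in>set_partitions L. refines \<upsilon> \<xi> \<and> ptype \<upsilon> = u"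
proof -
  obtain \<upsilon>' \<xi>' where "partition_on L \<upsilon>'" "partition_on L \<xi>'" "ptype \<upsilon>' = u"
    "ptype \<xi>' = ptype \<xi>" "refines \<upsilon>' \<xi>'"
    using assms(3) by (auto simp: int_refines_def set_partitions_def)
  with ex_refinement_with_ptype[OF assms(1,1)] assms(2) show ?thesis
    by (auto simp: set_partitions_def)
qed

lemma int_refines_size_less:
  assumes "finite L" "int_refines L u x" "u \<noteq> x"
  shows "size x < size u"
proof -
  obtain \<upsilon> \<xi> where "partition_on L \<upsilon>" "partition_on L \<xi>" "ptype \<upsilon> = u" "ptype \<xi> = x"
    "refines \<upsilon> \<xi>"
    using assms(2) by (auto simp: int_refines_def set_partitions_def)
  moreover have "\<upsilon> \<noteq> \<xi>"
    using assms(3) calculation by blast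
  ultimately have "card \<xi> < card \<upsilon>"
    using refines_card_less[OF assms(1)] by blast
  with \<open>ptype \<upsilon> = u\<close> \<open>ptype \<xi> = x\<close> show ?thesis
    by (metis ptype_def size_image_mset size_mset_set)
qed

lemma partial_order_int_refines:
  assumes "finite L"
  shows "partial_order_on (int_partitions (card L)) {(u, x). int_refines L u x}"
  unfolding partial_order_on_def preorder_on_def
proof (intro conjI)
  show "{(u, x). int_refines L u x} \<subseteq> int_partitions (card L) \<times> int_partitions (card L)"
    using ptype_set_partitions[OF assms] by (auto simp: int_refines_def)
  show "refl_on (int_partitions (card L)) {(u, x). int_refines L u x}"
  proof (rule refl_onI)
    fix m assume "m \<in> int_partitions (card L)"
    then have "m \<in> ptype ` set_partitions L"
      by (simp add: ptype_set_partitions[OF assms])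
    then obtain \<xi> where "\<xi> \<in> set_partitions L" "ptype \<xi> = m"
      by blast
    then show "(m, m) \<in> {(u, x). int_refines L u x}"
      by (auto simp: int_refines_def refines_def)
  qed
  show "trans {(u, x). int_refines L u x}"
  proof (rule transI, clarsimp)
    fix u x y assume "int_refines L u x" "int_refines L x y"
    moreover obtain \<xi> \<eta> where "\<xi> \<in> set_partitions L" "\<eta> \<in> set_partitions L" "ptype \<xi> = x"
      "ptype \<eta> = y" "refines \<xi> \<eta>"
      using \<open>int_refines L x y\<close> by (auto simp: int_refines_def)
    ultimately obtain \<upsilon> where "\<upsilon> \<in> set_partitions L" "refines \<upsilon> \<xi>" "ptype \<upsilon> = u"
      using int_refines_lift[OF assms] by blast
    with \<open>refines \<xi> \<eta>\<close> have "refines \<upsilon> \<eta>"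
      by (meson order_trans refines_def)
    with \<open>\<upsilon> \<in> set_partitions L\<close> \<open>\<eta> \<in> set_partitions L\<close> \<open>ptype \<upsilon> = u\<close> \<open>ptype \<eta> = y\<close>
    show "int_refines L u y"
      by (auto simp: int_refines_def)
  qed
  show "antisym {(u, x). int_refines L u x}"
  proof (rule antisymI, clarsimp)
    fix u x assume "int_refines L u x" "int_refines L x u"
    then show "u = x"
      using int_refines_size_less[OF assms] by (metis less_asym)
  qed
qed

lemma lifting_surjection_ptype:
  assumes "finite L"
  shows "lifting_surjection ptype (set_partitions L) refines (int_partitions (card L)) (int_refines L)"
proof
  show "ptype ` set_partitions L = int_partitions (card L)"
    by (rule ptype_set_partitions[OF assms])
  show "int_refines L (ptype \<upsilon>) (ptype \<xi>)"
    if "\<xi> \<in> set_partitions L" "\<upsilon> \<in> set_partitions L" "refines \<upsilon> \<xi>" for \<xi> \<upsilon>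
    using that by (auto simp: int_refines_def)
  show "\<exists>\<upsilon>\<in>set_partitions L. refines \<upsilon> \<xi> \<and> ptype \<upsilon> = u"
    if "\<xi> \<in> set_partitions L" "u \<in> int_partitions (card L)" "int_refines L u (ptype \<xi>)" for \<xi> u
    using int_refines_lift[OF assms] that by blast
qed

lemma lifting_surjection_image_ptype:
  assumes "finite L"
  shows "lifting_surjection ((`) ptype) (P_II L) (\<supseteq>) (tP_II L (card L)) (\<supseteq>)"
proof -
  interpret lifting_surjection ptype "set_partitions L" refines "int_partitions (card L)" "int_refines L"
    by (rule lifting_surjection_ptype[OF assms])
  show ?thesis
  proof
    show "(`) ptype ` P_II L = tP_II L (card L)"
      unfolding P_II_def tP_II_def by (rule image_down_sets)
  next
    fix \<A> \<B> :: "'a set set set"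
    show "\<A> \<subseteq> \<B> \<Longrightarrow> ptype ` \<A> \<subseteq> ptype ` \<B>"
      by (rule image_mono)
  next
    fix \<A> tB
    assume "\<A> \<in> P_II L" "tB \<in> tP_II L (card L)" "ptype ` \<A> \<subseteq> tB"
    define \<B> where "\<B> = \<A> \<union> {\<xi> \<in> set_partitions L. ptype \<xi> \<in> tB}"
    note vimage = vimage_in_down_sets[of tB, folded P_II_def tP_II_def, OF \<open>tB \<in> tP_II L (card L)\<close>]
    have "\<B> \<in> P_II L"
      unfolding \<B>_def P_II_def
      using \<open>\<A> \<in> P_II L\<close> vimage(1) by (intro Un_in_down_sets) (simp_all add: P_II_def)
    moreover have "ptype ` \<B> = tB"
      unfolding \<B>_def image_Un vimage(2) using \<open>ptype ` \<A> \<subseteq> tB\<close> by blast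
    ultimately show "\<exists>\<B>\<in>P_II L. \<A> \<subseteq> \<B> \<and> ptype ` \<B> = tB"
      by (auto simp: \<B>_def)
  qed
qed

theorem corollary1:
  fixes L :: "'a set" and n :: nat
  assumes "finite L" and "card L = n"
  shows "partial_order_on (int_partitions n) {(u, x). int_refines L u x}
    \<and> (image ptype) ` P_II L = tP_II L n
    \<and> (\<forall>tA\<in>tP_II L n. \<forall>tB\<in>tP_II L n.
         (\<exists>A\<in>P_II L. \<exists>B\<in>P_II L. ptype ` A = tA \<and> ptype ` B = tB \<and> B \<subseteq> A)
         \<longleftrightarrow> tB \<subseteq> tA)
    \<and> (\<lambda>\<AA>. (image ptype) ` \<AA>) ` P_III L = tP_III L n
    \<and> (\<forall>tA\<in>tP_III L n. \<forall>tB\<in>tP_III L n.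
         (\<exists>A\<in>P_III L. \<exists>B\<in>P_III L. (image ptype) ` A = tA \<and> (image ptype) ` B = tB \<and> B \<subseteq> A)
         \<longleftrightarrow> tB \<subseteq> tA)"
proof -
  interpret II: lifting_surjection ptype "set_partitions L" refines "int_partitions n" "int_refines L"
    using lifting_surjection_ptype[OF assms(1)] assms(2) by simp
  interpret III: lifting_surjection "(`) ptype" "P_II L" "(\<supseteq>)" "tP_II L n" "(\<supseteq>)"
    using lifting_surjection_image_ptype[OF assms(1)] assms(2) by simp
  have "P_II L = down_sets (set_partitions L) refines" "tP_II L n = down_sets (int_partitions n) (int_refines L)"
    "P_III L = down_sets (P_II L) (\<supseteq>)" "tP_III L n = down_sets (tP_II L n) (\<supseteq>)"
    by (simp_all add: P_II_def tP_II_def P_III_def tP_III_def up_sets_eq_down_sets_converse)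
  then show ?thesis
    using partial_order_int_refines[OF assms(1)] assms(2)
      II.image_down_sets II.exists_down_sets_image_subset_iff
      III.image_down_sets III.exists_down_sets_image_subset_iff
    by simp
qed

end
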